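(* With $\hat A=T(V)/I$, $\hat q$, and $\hat x_j=x_j+I$ as constructed below, the set consisting of $\hat 1=1+I$, $\hat q$, all products $\hat x_{j_1}\cdots\hat x_{j_m}$ with $m\ge1$ and $(j_1,\dots,j_m)\in J^m$, and all products $\hat x_{j_1}\cdots\hat x_{j_t}\,\hat q\,\hat x_{j_{t+1}}\cdots\hat x_{j_m}$ with $m\ge1$, $0\le t\le m$, $(j_1,\dots,j_m)\in J^m$, is a $\mathbf{k}$-basis of $\hat A$ (these elements being pairwise distinct for distinct index data).
   Context: Let $X=\{x_j:j\in J\}$ be a set, $\tilde q\notin X$ a symbol, $V$ the $\mathbf{k}$-vector space with basis $X\cup\{\tilde q\}$, $T(V)$ its tensor algebra, $I$ the two-sided ideal of $T(V)$ generated by $\tilde q\otimes\tilde q-\tilde q$ and all $\tilde q\otimes a\otimes\tilde q-\tilde q\otimes a$ for $a\in T(V)$; $\hat A=T(V)/I$, $\hat q=\tilde q+I$, $\hat x_j=x_j+I$. *)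

theory Defs
  imports Main
begin

text \<open>Basis words of T(V) are lists over 'j option: Some j stands for x_j,
  None stands for the extra symbol q.  Elements of T(V) are finitely
  supported functions from words to the field 'k; multiplication is
  concatenation (convolution).\<close>

type_synonym 'j word = "'j option list"

definition TV :: "('j word \<Rightarrow> 'k::field) set" where
  "TV = {f. finite {w. f w \<noteq> 0}}"

definition mono :: "'j word \<Rightarrow> ('j word \<Rightarrow> 'k::field)" where
  "mono w = (\<lambda>u. if u = w then 1 else 0)"

definition tmul :: "('j word \<Rightarrow> 'k::field) \<Rightarrow> ('j word \<Rightarrow> 'k) \<Rightarrow> ('j word \<Rightarrow> 'k)" where
  "tmul f g = (\<lambda>w. \<Sum>n\<le>length w. f (take n w) * g (drop n w))"

definition tadd :: "('j word \<Rightarrow> 'k::field) \<Rightarrow> ('j word \<Rightarrow> 'k) \<Rightarrow> ('j word \<Rightarrow> 'k)" where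
  "tadd f g = (\<lambda>w. f w + g w)"

definition tdiff :: "('j word \<Rightarrow> 'k::field) \<Rightarrow> ('j word \<Rightarrow> 'k) \<Rightarrow> ('j word \<Rightarrow> 'k)" where
  "tdiff f g = (\<lambda>w. f w - g w)"

definition tscale :: "'k::field \<Rightarrow> ('j word \<Rightarrow> 'k) \<Rightarrow> ('j word \<Rightarrow> 'k)" where
  "tscale c f = (\<lambda>w. c * f w)"

definition gens :: "('j word \<Rightarrow> 'k::field) set" where
  "gens = {tdiff (mono [None, None]) (mono [None])} \<union>
          {tdiff (tmul (tmul (mono [None]) a) (mono [None])) (tmul (mono [None]) a) | a. a \<in> TV}"

inductive_set idealI :: "('j word \<Rightarrow> 'k::field) set" where
  gen: "g \<in> gens \<Longrightarrow> g \<in> idealI"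
| zero: "(\<lambda>_. 0) \<in> idealI"
| add: "a \<in> idealI \<Longrightarrow> b \<in> idealI \<Longrightarrow> tadd a b \<in> idealI"
| lmul: "f \<in> TV \<Longrightarrow> a \<in> idealI \<Longrightarrow> tmul f a \<in> idealI"
| rmul: "f \<in> TV \<Longrightarrow> a \<in> idealI \<Longrightarrow> tmul a f \<in> idealI"

datatype 'j bidx =
    BOne
  | BQ
  | BX "'j list"
  | BXQ "'j list" nat

fun valid_bidx :: "'j bidx \<Rightarrow> bool" where
  "valid_bidx BOne = True"
| "valid_bidx BQ = True"
| "valid_bidx (BX js) = (js \<noteq> [])"
| "valid_bidx (BXQ js t) = (js \<noteq> [] \<and> t \<le> length js)"

fun bword :: "'j bidx \<Rightarrow> 'j word" where
  "bword BOne = []"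
| "bword BQ = [None]"
| "bword (BX js) = map Some js"
| "bword (BXQ js t) = map Some (take t js) @ [None] @ map Some (drop t js)"

definition belem :: "'j bidx \<Rightarrow> ('j word \<Rightarrow> 'k::field)" where
  "belem b = mono (bword b)"

end

theory Submission
  imports Defs
begin

(* Every word w has a
   normal form nf w: the letters before the first q are kept, the first q is
   kept, and every later q is deleted.  The normal words are exactly the words
   bword b of the valid basis indices b.

   Spanning: each word w is congruent to nf w modulo I (delete the second q of a
   factor q v q, which is a multiple of the generator qvq - qv), so every element
   of T(V) is congruent to a combination of basis words.

   Independence: the linear functionals on T(V) that only depend on the normal
   form of a word, u \<mapsto> h (nf u), vanish on every generator and the set of
   elements they annihilate is closed under multiplication by T(V) on both
   sides, because nf (u @ w) depends only on u and nf w (and symmetrically).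
   Hence they vanish on I, and evaluating them on a combination of basis words
   picks out single coefficients. *)


section \<open>Normal forms of words\<close>

fun nf :: "'j word \<Rightarrow> 'j word" where
  "nf [] = []"
| "nf (Some j # w) = Some j # nf w"
| "nf (None # w) = None # removeAll None w"

lemma nf_append_q_free: "None \<notin> set u \<Longrightarrow> nf (u @ w) = u @ nf w"
proof (induction u)
  case (Cons x u) then show ?case by (cases x) auto
qed simp

lemma nf_q_free: "None \<notin> set u \<Longrightarrow> nf u = u"
  using nf_append_q_free[of u "[]"] by simp

lemma nf_append_after_q: "None \<in> set u \<Longrightarrow> nf (u @ w) = nf u @ removeAll None w"
proof (induction u)
  case (Cons x u) then show ?case by (cases x) auto
qed simp

lemma q_in_nf: "None \<in> set (nf w) \<longleftrightarrow> None \<in> set w"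
  by (induction w rule: nf.induct) auto

lemma nf_idem: "nf (nf w) = nf w"
  by (induction w rule: nf.induct) (auto simp: nf_q_free)

text \<open>The normal form of a product depends only on the normal forms of its factors;
  this is what makes the functionals factoring through nf compatible with
  multiplication.\<close>
lemma nf_append_right: "nf (u @ w) = nf (u @ nf w)"
proof (cases "None \<in> set u")
  case True
  have "removeAll None (nf w) = removeAll None w"
    by (induction w rule: nf.induct) auto
  then show ?thesis using True by (simp add: nf_append_after_q)
qed (simp add: nf_append_q_free nf_idem)

lemma nf_append_left: "nf (u @ w) = nf (nf u @ w)"
  by (cases "None \<in> set u") (auto simp: nf_append_q_free nf_append_after_q nf_q_free nf_idem q_in_nf)

lemma not_normal_two_q: "nf w \<noteq> w \<Longrightarrow> \<exists>u v z. w = u @ None # v @ None # z"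
proof (induction w rule: nf.induct)
  case (2 j w)
  then obtain u v z where "w = u @ None # v @ None # z" by auto
  then show ?case by (intro exI[of _ "Some j # u"] exI[of _ v] exI[of _ z]) simp
next
  case (3 w)
  then have "None \<in> set w" using removeAll_id by fastforce
  then obtain v z where "w = v @ None # z" by (meson split_list)
  then show ?case by (intro exI[of _ "[]"] exI[of _ v] exI[of _ z]) simp
qed simp

lemma nf_delete_second_q: "nf (u @ None # v @ None # z) = nf (u @ None # v @ z)"
  by (cases "None \<in> set u") (auto simp: nf_append_after_q nf_append_q_free)


abbreviation supp :: "('a \<Rightarrow> 'k::zero) \<Rightarrow> 'a set" where
  "supp f \<equiv> {u. f u \<noteq> 0}"

lemma tmul_pairs:
  fixes f g :: "'j word \<Rightarrow> 'k::field"
  assumes "finite A" "finite B" "supp f \<subseteq> A" "supp g \<subseteq> B"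
  shows "tmul f g w = (\<Sum>p\<in>A\<times>B. if fst p @ snd p = w then f (fst p) * g (snd p) else 0)"
proof -
  let ?split = "\<lambda>n. (take n w, drop n w)"
  let ?P = "{p. fst p @ snd p = w}"
  have inj: "inj_on ?split {..length w}"
  proof (rule inj_onI)
    fix m n assume "m \<in> {..length w}" "n \<in> {..length w}" "?split m = ?split n"
    then show "m = n" by (metis atMost_iff length_take min.absorb2 prod.inject)
  qed
  have img: "?split ` {..length w} = ?P"
  proof
    show "?P \<subseteq> ?split ` {..length w}"
    proof
      fix p assume p: "p \<in> ?P"
      then have "p = ?split (length (fst p))" by (cases p) auto
      moreover have "length (fst p) \<le> length w" using p by auto
      ultimately show "p \<in> ?split ` {..length w}" by blast
    qed
  qed auto
  have finP: "finite ?P" using img by (metis finite_atMost finite_imageI)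
  have "tmul f g w = (\<Sum>p\<in>?P. f (fst p) * g (snd p))"
    unfolding tmul_def img[symmetric] by (subst sum.reindex[OF inj]) simp
  also have "\<dots> = (\<Sum>p\<in>?P \<inter> (A\<times>B). f (fst p) * g (snd p))"
  proof (rule sum.mono_neutral_right[OF finP])
    show "\<forall>p\<in>?P - ?P \<inter> (A\<times>B). f (fst p) * g (snd p) = 0"
      using assms(3,4) by (auto simp: mem_Times_iff)
  qed blast
  also have "\<dots> = (\<Sum>p\<in>(A\<times>B) \<inter> ?P. f (fst p) * g (snd p))"
    by (simp only: Int_commute)
  also have "\<dots> = (\<Sum>p\<in>A\<times>B. if p \<in> ?P then f (fst p) * g (snd p) else 0)"
    using assms(1,2) by (simp add: sum.inter_restrict)
  finally show ?thesis by simp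
qed

lemma supp_tmul: "supp (tmul f g) \<subseteq> (\<lambda>p. fst p @ snd p) ` (supp f \<times> supp g)"
proof
  fix w assume "w \<in> supp (tmul f g)"
  then have "(\<Sum>n\<le>length w. f (take n w) * g (drop n w)) \<noteq> 0" by (simp add: tmul_def)
  then obtain n where "f (take n w) * g (drop n w) \<noteq> 0" by (meson sum.neutral)
  then show "w \<in> (\<lambda>p. fst p @ snd p) ` (supp f \<times> supp g)"
    by (intro image_eqI[of _ _ "(take n w, drop n w)"]) auto
qed

lemma TV_tmul: "f \<in> TV \<Longrightarrow> g \<in> TV \<Longrightarrow> tmul f g \<in> TV"
  unfolding TV_def using supp_tmul finite_subset by blast

lemma TV_tadd: "f \<in> TV \<Longrightarrow> g \<in> TV \<Longrightarrow> tadd f g \<in> TV"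
  unfolding TV_def tadd_def by (auto intro: finite_subset[of _ "supp f \<union> supp g"])

lemma TV_tdiff: "f \<in> TV \<Longrightarrow> g \<in> TV \<Longrightarrow> tdiff f g \<in> TV"
  unfolding TV_def tdiff_def by (auto intro: finite_subset[of _ "supp f \<union> supp g"])

lemma supp_mono: "supp (Defs.mono w :: 'j word \<Rightarrow> 'k::field) = {w}"
  by (auto simp: Defs.mono_def)

lemma TV_mono: "Defs.mono w \<in> TV"
  by (simp add: TV_def supp_mono)

lemma mono_tmul: "tmul (Defs.mono u) (Defs.mono v) = (Defs.mono (u @ v) :: 'j word \<Rightarrow> 'k::field)"
proof
  fix w
  have "tmul (Defs.mono u) (Defs.mono v) w =
    (\<Sum>p\<in>{u}\<times>{v}. if fst p @ snd p = w then (Defs.mono u (fst p) :: 'k) * Defs.mono v (snd p) else 0)"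
    by (rule tmul_pairs) (auto simp: supp_mono)
  then show "tmul (Defs.mono u) (Defs.mono v) w = (Defs.mono (u @ v) w :: 'k)"
    by (auto simp: Defs.mono_def)
qed

lemma tmul_tdiff_left: "tmul f (tdiff a b) = tdiff (tmul f a) (tmul f b)"
  by (auto simp: tmul_def tdiff_def sum_subtractf right_diff_distrib)

lemma tmul_tdiff_right: "tmul (tdiff a b) f = tdiff (tmul a f) (tmul b f)"
  by (auto simp: tmul_def tdiff_def sum_subtractf left_diff_distrib)


definition pairing :: "('a \<Rightarrow> 'k) \<Rightarrow> ('a \<Rightarrow> 'k::semiring_0) \<Rightarrow> 'k" where
  "pairing k g = (\<Sum>u\<in>supp g. k u * g u)"

lemma pairing_eq: "finite F \<Longrightarrow> supp g \<subseteq> F \<Longrightarrow> pairing k g = (\<Sum>u\<in>F. k u * g u)"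
  unfolding pairing_def by (intro sum.mono_neutral_left) auto

lemma pairing_tdiff:
  assumes "f \<in> TV" "g \<in> TV"
  shows "pairing k (tdiff f g) = pairing k f - pairing k g"
proof -
  have fin: "finite (supp f \<union> supp g)" using assms by (auto simp: TV_def)
  have "supp (tdiff f g) \<subseteq> supp f \<union> supp g" by (auto simp: tdiff_def)
  then show ?thesis
    using pairing_eq[OF fin, of "tdiff f g" k] pairing_eq[OF fin, of f k] pairing_eq[OF fin, of g k]
    by (auto simp: tdiff_def sum_subtractf right_diff_distrib)
qed

lemma pairing_tadd:
  assumes "f \<in> TV" "g \<in> TV"
  shows "pairing k (tadd f g) = pairing k f + pairing k g"
proof -
  have fin: "finite (supp f \<union> supp g)" using assms by (auto simp: TV_def)
  have "supp (tadd f g) \<subseteq> supp f \<union> supp g" by (auto simp: tadd_def)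
  then show ?thesis
    using pairing_eq[OF fin, of "tadd f g" k] pairing_eq[OF fin, of f k] pairing_eq[OF fin, of g k]
    by (auto simp: tadd_def sum.distrib distrib_left)
qed

lemma pairing_tmul:
  fixes f g :: "'j word \<Rightarrow> 'k::field"
  assumes "f \<in> TV" "g \<in> TV"
  shows "pairing k (tmul f g) = (\<Sum>x\<in>supp f. \<Sum>y\<in>supp g. k (x @ y) * f x * g y)"
proof -
  let ?A = "supp f" and ?B = "supp g"
  let ?C = "(\<lambda>p. fst p @ snd p) ` (?A \<times> ?B)"
  have finAB: "finite ?A" "finite ?B" using assms by (auto simp: TV_def)
  then have finC: "finite ?C" by auto
  have "pairing k (tmul f g) = (\<Sum>u\<in>?C. k u * tmul f g u)"
    by (rule pairing_eq[OF finC supp_tmul])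
  also have "\<dots> = (\<Sum>u\<in>?C. \<Sum>p\<in>?A\<times>?B. if fst p @ snd p = u then k u * (f (fst p) * g (snd p)) else 0)"
    by (simp add: tmul_pairs[OF finAB order_refl order_refl] sum_distrib_left if_distrib cong: if_cong)
  also have "\<dots> = (\<Sum>p\<in>?A\<times>?B. \<Sum>u\<in>?C. if fst p @ snd p = u then k u * (f (fst p) * g (snd p)) else 0)"
    by (rule sum.swap)
  also have "\<dots> = (\<Sum>p\<in>?A\<times>?B. k (fst p @ snd p) * f (fst p) * g (snd p))"
    using finC by (intro sum.cong refl) (auto simp: sum.delta mult.assoc)
  also have "\<dots> = (\<Sum>x\<in>?A. \<Sum>y\<in>?B. k (x @ y) * f x * g y)"
    by (simp add: sum.cartesian_product case_prod_beta)
  finally show ?thesis .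
qed

lemma pairing_tmul_left:
  "f \<in> TV \<Longrightarrow> a \<in> TV \<Longrightarrow>
   pairing k (tmul f a) = (\<Sum>x\<in>supp f. f x * pairing (\<lambda>u. k (x @ u)) a)"
  by (simp add: pairing_tmul pairing_def[of _ a] sum_distrib_left mult_ac)

lemma pairing_tmul_right:
  assumes "f \<in> TV" "a \<in> TV"
  shows "pairing k (tmul a f) = (\<Sum>y\<in>supp f. f y * pairing (\<lambda>u. k (u @ y)) a)"
proof -
  have "pairing k (tmul a f) = (\<Sum>y\<in>supp f. \<Sum>x\<in>supp a. k (x @ y) * a x * f y)"
    by (subst pairing_tmul[OF assms(2,1)]) (rule sum.swap)
  then show ?thesis by (simp add: pairing_def[of _ a] sum_distrib_left mult_ac)
qed

lemma pairing_mono_tmul: "a \<in> TV \<Longrightarrow> pairing k (tmul (Defs.mono w) a) = pairing (\<lambda>u. k (w @ u)) a"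
  by (simp add: pairing_tmul_left TV_mono supp_mono) (simp add: Defs.mono_def)

lemma pairing_tmul_mono: "a \<in> TV \<Longrightarrow> pairing k (tmul a (Defs.mono w)) = pairing (\<lambda>u. k (u @ w)) a"
  by (simp add: pairing_tmul_right TV_mono supp_mono) (simp add: Defs.mono_def)

lemma pairing_lincomb:
  fixes c :: "'b \<Rightarrow> 'k::field"
  assumes "finite S"
  shows "pairing k (\<lambda>w. \<Sum>b\<in>S. c b * Defs.mono (\<phi> b) w) = (\<Sum>b\<in>S. c b * k (\<phi> b))"
proof -
  have fin: "finite (\<phi> ` S)" using assms by simp
  have "supp (\<lambda>w. \<Sum>b\<in>S. c b * Defs.mono (\<phi> b) w) \<subseteq> \<phi> ` S"
  proof
    fix w assume "w \<in> supp (\<lambda>w. \<Sum>b\<in>S. c b * Defs.mono (\<phi> b) w)"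
    then obtain b where "b \<in> S" "c b * Defs.mono (\<phi> b) w \<noteq> 0" by (meson sum.neutral mem_Collect_eq)
    then show "w \<in> \<phi> ` S" by (auto simp: Defs.mono_def split: if_splits)
  qed
  then have "pairing k (\<lambda>w. \<Sum>b\<in>S. c b * Defs.mono (\<phi> b) w)
      = (\<Sum>u\<in>\<phi> ` S. \<Sum>b\<in>S. c b * (k u * Defs.mono (\<phi> b) u))"
    by (simp add: pairing_eq[OF fin] sum_distrib_left mult_ac)
  also have "\<dots> = (\<Sum>b\<in>S. c b * (\<Sum>u\<in>\<phi> ` S. k u * Defs.mono (\<phi> b) u))"
    by (simp add: sum.swap[of _ "\<phi> ` S"] sum_distrib_left)
  also have "\<dots> = (\<Sum>b\<in>S. c b * k (\<phi> b))"
    using fin by (intro sum.cong refl) (simp add: Defs.mono_def if_distrib sum.delta cong: if_cong)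
  finally show ?thesis .
qed


section \<open>The functionals factoring through normal forms vanish on I\<close>

definition nf_null :: "('j word \<Rightarrow> 'k::field) \<Rightarrow> bool" where
  "nf_null g \<longleftrightarrow> g \<in> TV \<and> (\<forall>h. pairing (\<lambda>u. h (nf u)) g = 0)"

lemma nf_nullD: "nf_null g \<Longrightarrow> pairing (\<lambda>u. h (nf u)) g = 0"
  by (simp add: nf_null_def)

lemma nf_null_gens: "g \<in> gens \<Longrightarrow> nf_null g"
proof -
  let ?q = "Defs.mono [None] :: 'j word \<Rightarrow> 'k::field"
  assume "g \<in> gens"
  then consider "g = tdiff (Defs.mono [None, None]) ?q"
    | a where "a \<in> TV" "g = tdiff (tmul (tmul ?q a) ?q) (tmul ?q a)"
    unfolding gens_def by blast
  then show "nf_null g"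
  proof cases
    case 1
    then show ?thesis by (simp add: nf_null_def TV_tdiff TV_mono pairing_tdiff pairing_eq[of "{_}"] supp_mono)
      (simp add: Defs.mono_def)
  next
    case (2 a)
    have qa: "tmul ?q a \<in> TV" using 2 TV_mono TV_tmul by blast
    text \<open>qaq and qa have the same image under every functional through nf,
      because nf (None # u @ [None]) = nf (None # u).\<close>
    have "pairing (\<lambda>u. h (nf u)) (tmul (tmul ?q a) ?q) = pairing (\<lambda>u. h (nf u)) (tmul ?q a)" for h
      using 2 qa by (simp add: pairing_tmul_mono pairing_mono_tmul)
    then show ?thesis using 2 qa by (simp add: nf_null_def TV_tdiff TV_tmul TV_mono pairing_tdiff)
  qed
qed

text \<open>Closure under multiplication uses that nf (x @ u) depends only on nf u,
  and nf (u @ y) only on nf u.\<close>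
lemma nf_null_lmul:
  assumes f: "f \<in> TV" and a: "nf_null a"
  shows "nf_null (tmul f a)"
proof -
  have "pairing (\<lambda>u. h (nf u)) (tmul f a) = 0" for h
  proof -
    have "pairing (\<lambda>u. h (nf u)) (tmul f a) = (\<Sum>x\<in>supp f. f x * pairing (\<lambda>u. h (nf (x @ nf u))) a)"
      using f a by (simp add: nf_null_def pairing_tmul_left nf_append_right[symmetric])
    moreover have "pairing (\<lambda>u. h (nf (x @ nf u))) a = 0" for x
      using nf_nullD[OF a, of "\<lambda>v. h (nf (x @ v))"] by simp
    ultimately show ?thesis by simp
  qed
  then show ?thesis using f a by (simp add: nf_null_def TV_tmul)
qed

lemma nf_null_rmul:
  assumes f: "f \<in> TV" and a: "nf_null a"
  shows "nf_null (tmul a f)"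
proof -
  have "pairing (\<lambda>u. h (nf u)) (tmul a f) = 0" for h
  proof -
    have "pairing (\<lambda>u. h (nf u)) (tmul a f) = (\<Sum>y\<in>supp f. f y * pairing (\<lambda>u. h (nf (nf u @ y))) a)"
      using f a by (simp add: nf_null_def pairing_tmul_right nf_append_left[symmetric])
    moreover have "pairing (\<lambda>u. h (nf (nf u @ y))) a = 0" for y
      using nf_nullD[OF a, of "\<lambda>v. h (nf (v @ y))"] by simp
    ultimately show ?thesis by simp
  qed
  then show ?thesis using f a by (simp add: nf_null_def TV_tmul)
qed

lemma ideal_nf_null: "g \<in> idealI \<Longrightarrow> nf_null g"
proof (induction g rule: idealI.induct)
  case zero
  then show ?case by (simp add: nf_null_def TV_def pairing_def)
next
  case (add a b)
  then show ?case by (simp add: nf_null_def TV_tadd pairing_tadd)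
qed (simp_all add: nf_null_gens nf_null_lmul nf_null_rmul)


section \<open>Every word is congruent to its normal form modulo I\<close>

text \<open>One reduction step: u q v q z \<equiv> u q v z, since the difference is u (qvq - qv) z.\<close>
lemma reduction_step_ideal:
  "tdiff (Defs.mono (u @ None # v @ None # z)) (Defs.mono (u @ None # v @ z))
     \<in> (idealI :: ('j word \<Rightarrow> 'k::field) set)"
proof -
  let ?q = "Defs.mono [None] :: 'j word \<Rightarrow> 'k"
  have "tdiff (tmul (tmul ?q (Defs.mono v)) ?q) (tmul ?q (Defs.mono v)) \<in> idealI"
    by (rule idealI.gen) (auto simp: gens_def TV_mono)
  then have "tmul (Defs.mono u) (tmul (tdiff (tmul (tmul ?q (Defs.mono v)) ?q) (tmul ?q (Defs.mono v)))
      (Defs.mono z)) \<in> idealI"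
    by (intro idealI.lmul idealI.rmul TV_mono)
  then show ?thesis by (simp add: tmul_tdiff_left tmul_tdiff_right mono_tmul)
qed

lemma ideal_congruence_trans:
  "tdiff a b \<in> idealI \<Longrightarrow> tdiff b c \<in> idealI \<Longrightarrow> tdiff a c \<in> (idealI :: ('j word \<Rightarrow> 'k::field) set)"
proof -
  assume "tdiff a b \<in> idealI" "tdiff b c \<in> idealI"
  moreover have "tdiff a c = tadd (tdiff a b) (tdiff b c)" by (auto simp: tadd_def tdiff_def)
  ultimately show ?thesis using idealI.add by simp
qed

lemma mono_nf_ideal: "tdiff (Defs.mono w) (Defs.mono (nf w)) \<in> (idealI :: ('j word \<Rightarrow> 'k::field) set)"
proof (induction "length w" arbitrary: w rule: less_induct)
  case less
  show ?case
  proof (cases "nf w = w")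
    case True
    then show ?thesis using idealI.zero by (simp add: tdiff_def)
  next
    case False
    then obtain u v z where w: "w = u @ None # v @ None # z" using not_normal_two_q by blast
    let ?w' = "u @ None # v @ z"
    have "tdiff (Defs.mono ?w') (Defs.mono (nf ?w')) \<in> (idealI :: ('j word \<Rightarrow> 'k) set)"
      using w by (intro less) simp
    then show ?thesis
      using ideal_congruence_trans reduction_step_ideal w nf_delete_second_q by metis
  qed
qed

lemma ideal_scale: "a \<in> idealI \<Longrightarrow> (\<lambda>x. k * a x) \<in> (idealI :: ('j word \<Rightarrow> 'k::field) set)"
proof -
  assume a: "a \<in> idealI"
  let ?k = "(\<lambda>u. if u = [] then k else 0) :: 'j word \<Rightarrow> 'k"
  have k: "?k \<in> TV" unfolding TV_def by (auto intro: finite_subset[of _ "{[]}"])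
  have "tmul ?k a = (\<lambda>x. k * a x)"
  proof
    fix x
    have "tmul ?k a x = (\<Sum>n\<le>length x. if n = 0 then k * a x else 0)"
      unfolding tmul_def by (intro sum.cong refl) auto
    then show "tmul ?k a x = k * a x" by simp
  qed
  then show ?thesis using idealI.lmul[OF k a] by simp
qed

lemma ideal_lincomb: "finite F \<Longrightarrow> (\<forall>w\<in>F. d w \<in> idealI) \<Longrightarrow>
   (\<lambda>x. \<Sum>w\<in>F. k w * d w x) \<in> (idealI :: ('j word \<Rightarrow> 'k::field) set)"
proof (induction F rule: finite_induct)
  case empty
  then show ?case using idealI.zero by simp
next
  case (insert w F)
  then have "(\<lambda>x. \<Sum>w\<in>insert w F. k w * d w x) = tadd (\<lambda>x. k w * d w x) (\<lambda>x. \<Sum>w\<in>F. k w * d w x)"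
    by (auto simp: tadd_def)
  moreover have "(\<lambda>x. k w * d w x) \<in> idealI" using insert.prems ideal_scale by blast
  moreover have "(\<lambda>x. \<Sum>w\<in>F. k w * d w x) \<in> idealI" using insert by blast
  ultimately show ?case using idealI.add by simp
qed


section \<open>Normal words are exactly the basis words\<close>

lemma nf_bword: "nf (bword b) = bword b"
  by (cases b) (auto simp: nf_append_q_free nf_q_free)

definition decode :: "'j word \<Rightarrow> 'j bidx" where
  "decode w =
    (if None \<notin> set w then (if w = [] then BOne else BX (map the w))
     else if w = [None] then BQ
     else BXQ (map the (removeAll None w)) (length (takeWhile (\<lambda>x. x \<noteq> None) w)))"

lemma map_Some_the: "None \<notin> set u \<Longrightarrow> map (Some \<circ> the) u = u"
  by (induction u) auto

lemma decode_bword: "valid_bidx b \<Longrightarrow> decode (bword b) = b"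
proof (cases b)
  case (BXQ js t)
  moreover assume "valid_bidx b"
  ultimately have "js \<noteq> []" "t \<le> length js" by auto
  then have "\<not> (take t js = [] \<and> drop t js = [])" by auto
  moreover have "takeWhile (\<lambda>x. x \<noteq> None) (map Some (take t js) @ None # map Some (drop t js))
      = map Some (take t js)" by (auto simp: takeWhile_append)
  ultimately show ?thesis using BXQ \<open>t \<le> length js\<close>
    by (auto simp: decode_def comp_def removeAll_id min_absorb2 simp flip: map_append)
qed (auto simp: decode_def comp_def)

lemma bword_inj: "valid_bidx b \<Longrightarrow> valid_bidx b' \<Longrightarrow> bword b = bword b' \<Longrightarrow> b = b'"
  by (metis decode_bword)

lemma decode_nf: "valid_bidx (decode (nf w)) \<and> bword (decode (nf w)) = nf w"
proof (cases "None \<in> set w")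
  case False
  then show ?thesis by (auto simp: decode_def nf_q_free map_Some_the)
next
  case True
  then obtain p s where w: "w = p @ None # s" and p: "None \<notin> set p" by (meson split_list_first)
  define r where "r = removeAll None s"
  have nfw: "nf w = p @ None # r" using w p by (simp add: nf_append_q_free r_def)
  have r: "None \<notin> set r" by (simp add: r_def)
  have "takeWhile (\<lambda>x. x \<noteq> None) (nf w) = p" using nfw p by (auto simp: takeWhile_append)
  moreover have "removeAll None (nf w) = p @ r" using nfw p r by simp
  ultimately have "decode (nf w) = (if p @ r = [] then BQ else BXQ (map the (p @ r)) (length p))"
    using nfw by (auto simp: decode_def)
  then show ?thesis using nfw p r by (auto simp: map_Some_the)
qed


lemma independence:
  fixes S :: "'j bidx set" and c :: "'j bidx \<Rightarrow> 'k::field"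
  assumes S: "finite S" "S \<subseteq> {b. valid_bidx b}"
    and I: "(\<lambda>w. \<Sum>b\<in>S. c b * belem b w) \<in> idealI"
    and b0: "b0 \<in> S"
  shows "c b0 = 0"
proof -
  text \<open>Evaluate the functional u \<mapsto> [nf u = bword b0].\<close>
  let ?h = "\<lambda>v. if v = bword b0 then 1 else (0::'k)"
  have "0 = pairing (\<lambda>u. ?h (nf u)) (\<lambda>w. \<Sum>b\<in>S. c b * belem b w)"
    using nf_nullD[OF ideal_nf_null[OF I], of ?h] by simp
  also have "\<dots> = (\<Sum>b\<in>S. c b * ?h (nf (bword b)))"
    unfolding belem_def by (rule pairing_lincomb[OF S(1)])
  also have "\<dots> = (\<Sum>b\<in>S. if b = b0 then c b0 else 0)"
  proof (rule sum.cong[OF refl])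
    fix b assume "b \<in> S"
    then have "nf (bword b) = bword b" "bword b = bword b0 \<longleftrightarrow> b = b0"
      using S(2) b0 nf_bword bword_inj[of b b0] by auto
    then show "c b * ?h (nf (bword b)) = (if b = b0 then c b0 else 0)" by simp
  qed
  also have "\<dots> = c b0" using S(1) b0 by simp
  finally show ?thesis by simp
qed

lemma spanning:
  fixes f :: "'j word \<Rightarrow> 'k::field"
  assumes f: "f \<in> TV"
  shows "\<exists>S c. finite S \<and> S \<subseteq> {b. valid_bidx b} \<and>
           tdiff f (\<lambda>w. \<Sum>b\<in>S. c b * belem b w) \<in> idealI"
proof -
  let ?F = "supp f"
  let ?idx = "\<lambda>w. decode (nf w)"
  have finF: "finite ?F" using f by (simp add: TV_def)
  define S where "S = ?idx ` ?F"
  define c where "c b = (\<Sum>w\<in>{w\<in>?F. ?idx w = b}. f w)" for b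
  have finS: "finite S" and valid: "S \<subseteq> {b. valid_bidx b}"
    using finF decode_nf by (auto simp: S_def)
  text \<open>f is the combination of its words, and the basis combination is the
    same combination of their normal forms.\<close>
  have expand: "f x = (\<Sum>w\<in>?F. f w * Defs.mono w x)" for x
    using finF by (simp add: Defs.mono_def if_distrib sum.delta' cong: if_cong)
  have combination: "(\<Sum>b\<in>S. c b * belem b x) = (\<Sum>w\<in>?F. f w * Defs.mono (nf w) x)" for x
  proof -
    have "(\<Sum>b\<in>S. c b * belem b x) = (\<Sum>b\<in>S. \<Sum>w\<in>{w\<in>?F. ?idx w = b}. f w * Defs.mono (bword (?idx w)) x)"
      by (simp add: c_def belem_def sum_distrib_right)
    also have "\<dots> = (\<Sum>w\<in>?F. f w * Defs.mono (bword (?idx w)) x)"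
      using finF finS by (intro sum.group) (auto simp: S_def)
    finally show ?thesis by (simp add: decode_nf)
  qed
  have "tdiff f (\<lambda>w. \<Sum>b\<in>S. c b * belem b w)
      = (\<lambda>x. \<Sum>w\<in>?F. f w * tdiff (Defs.mono w) (Defs.mono (nf w)) x)"
  proof
    fix x
    show "tdiff f (\<lambda>w. \<Sum>b\<in>S. c b * belem b w) x
        = (\<Sum>w\<in>?F. f w * tdiff (Defs.mono w) (Defs.mono (nf w)) x)"
      unfolding tdiff_def combination by (subst expand[of x]) (simp add: right_diff_distrib sum_subtractf)
  qed
  moreover have "(\<lambda>x. \<Sum>w\<in>?F. f w * tdiff (Defs.mono w) (Defs.mono (nf w)) x) \<in> idealI"
    by (rule ideal_lincomb[OF finF]) (simp add: mono_nf_ideal)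
  ultimately show ?thesis using finS valid by (intro exI[of _ S] exI[of _ c]) simp
qed

theorem proposition3p2:
  fixes dummy :: "'j itself" and dummyk :: "'k::field itself"
  shows
    "(\<forall>f::'j word \<Rightarrow> 'k. f \<in> TV \<longrightarrow>
        (\<exists>S c. finite S \<and> S \<subseteq> {b. valid_bidx b} \<and>
           tdiff f (\<lambda>w. \<Sum>b\<in>S. c b * belem b w) \<in> idealI))
     \<and>
     (\<forall>(S::'j bidx set) (c::'j bidx \<Rightarrow> 'k). finite S \<and> S \<subseteq> {b. valid_bidx b} \<and>
        (\<lambda>w. \<Sum>b\<in>S. c b * belem b w) \<in> idealI \<longrightarrow> (\<forall>b\<in>S. c b = 0))"
  using spanning independence by blast

end
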